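(* Let $f:\mathbb{R}^d\to\mathbb{R}$ satisfy the Standing Assumptions with constants $0<\mu\le L$ and $M>0$. Let $x_t\in\mathbb{R}^d$ with $\nabla f(x_t)\ne0$, let $G_t$ be symmetric positive definite with $$\nabla^2f(x_t)\preceq G_t\preceq\eta\,\nabla^2f(x_t)$$ for some constant $\eta\ge1$, and let $x_{t+1}=x_t-G_t^{-1}\nabla f(x_t)$. Suppose $M\lambda_t\le2$, where $\lambda_t:=\lambda_f(x_t)$. Let $r_t=\|x_{t+1}-x_t\|_{x_t}$ and $J_t=\int_0^1\nabla^2f(x_t+\tau(x_{t+1}-x_t))\,d\tau$. Then $$r_t\le\lambda_t\qquad\text{and}\qquad \theta(J_t,G_t,x_{t+1}-x_t)\le\frac{\eta-1+\frac{M\lambda_t}{2}}{\eta}.$$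
   Context: Standing Assumptions: $f$ is twice differentiable, $\mu$-strongly convex and has $L$-Lipschitz gradient, and is strongly self-concordant with constant $M>0$: for all $x,y,z,w\in\mathbb{R}^d$, $\nabla^2f(y)-\nabla^2f(x)\preceq M\|y-x\|_z\nabla^2f(w)$, where $\|h\|_z:=\sqrt{h^\top\nabla^2f(z)h}$. Newton decrement: $\lambda_f(x):=\sqrt{\nabla f(x)^\top\nabla^2f(x)^{-1}\nabla f(x)}$. $\theta(A,G,u):=\left(\frac{u^\top (G-A)A^{-1}(G-A)u}{u^\top GA^{-1}Gu}\right)^{1/2}$. *)

theory Defs
  imports "HOL-Analysis.Analysis"
begin

definition loewner_le :: "real^'n^'n \<Rightarrow> real^'n^'n \<Rightarrow> bool" where
  "loewner_le A B \<longleftrightarrow> (\<forall>h. h \<bullet> (A *v h) \<le> h \<bullet> (B *v h))"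

definition sym_pos_def :: "real^'n^'n \<Rightarrow> bool" where
  "sym_pos_def A \<longleftrightarrow> transpose A = A \<and> (\<forall>h. h \<noteq> 0 \<longrightarrow> 0 < h \<bullet> (A *v h))"

definition newton_decrement :: "(real^'n \<Rightarrow> real^'n) \<Rightarrow> (real^'n \<Rightarrow> real^'n^'n) \<Rightarrow> real^'n \<Rightarrow> real" where
  "newton_decrement g H x = sqrt (g x \<bullet> (matrix_inv (H x) *v g x))"

definition theta :: "real^'n^'n \<Rightarrow> real^'n^'n \<Rightarrow> real^'n \<Rightarrow> real" where
  "theta A G u = sqrt ((u \<bullet> ((G - A) ** matrix_inv A ** (G - A) *v u))
                      / (u \<bullet> (G ** matrix_inv A ** G *v u)))"

definition standing_assumptions ::
  "(real^'n \<Rightarrow> real) \<Rightarrow> (real^'n \<Rightarrow> real^'n) \<Rightarrow> (real^'n \<Rightarrow> real^'n^'n) \<Rightarrow> real \<Rightarrow> real \<Rightarrow> real \<Rightarrow> bool" where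
  "standing_assumptions f g H \<mu> L M \<longleftrightarrow>
     (\<forall>x. (f has_derivative (\<lambda>h. g x \<bullet> h)) (at x)) \<and>
     (\<forall>x. (g has_derivative (\<lambda>h. H x *v h)) (at x)) \<and>
     (\<forall>x y. f y \<ge> f x + g x \<bullet> (y - x) + \<mu> / 2 * (norm (y - x))\<^sup>2) \<and>
     (\<forall>x y. norm (g x - g y) \<le> L * norm (x - y)) \<and>
     (\<forall>x y z w. loewner_le (H y - H x) ((M * sqrt ((y - x) \<bullet> (H z *v (y - x)))) *\<^sub>R H w))"

end

theory Submission
  imports Defs
begin

text \<open>
  Write A for the Hessian at x_t, u = x_{t+1} - x_t and w = A^{-1} grad f(x_t).
  Since G_t u = - grad f(x_t) = - A w, we get r_t^2 \<le> u^T G_t u = - u^T A w \<le> r_t \<lambda>_t by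
  Cauchy-Schwarz in the A-inner product, so r_t \<le> \<lambda>_t. Strong self-concordance along the
  segment gives (1 - M r_t / 2) A \<preceq> J_t \<preceq> (1 + M r_t / 2) A, and together with
  A \<preceq> G_t \<preceq> \<eta> A and r_t \<le> \<lambda>_t this yields (1 - c) G_t \<preceq> J_t \<preceq> (1 + c) G_t
  for c = (\<eta> - 1 + M \<lambda>_t / 2) / \<eta> \<le> 1. Any such two-sided bound forces \<theta>(J, G, u) \<le> c:
  with v = J^{-1} G u the numerator and denominator of \<theta>^2 are v^T J v - 2 u^T G u + u^T J u
  and v^T J v, and testing the bound on u - (1 - c) v and (1 + c) v - u gives exactly the
  required inequality. Symmetry of the Hessians, used throughout, follows from the twice
  differentiability of f.
\<close>

section \<open>Quadratic forms of symmetric matrices\<close>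

lemma symmetric_matrix_inner_commute:
  fixes A :: "real^'n^'n"
  assumes "transpose A = A"
  shows "x \<bullet> (A *v y) = y \<bullet> (A *v x)"
  by (metis assms dot_lmul_matrix inner_commute vector_transpose_matrix)

lemma quadratic_form_scaleR_add:
  fixes A :: "real^'n^'n"
  assumes "transpose A = A"
  shows "(a *\<^sub>R u + b *\<^sub>R v) \<bullet> (A *v (a *\<^sub>R u + b *\<^sub>R v))
       = a\<^sup>2 * (u \<bullet> (A *v u)) + 2 * a * b * (u \<bullet> (A *v v)) + b\<^sup>2 * (v \<bullet> (A *v v))"
  using symmetric_matrix_inner_commute[OF assms, of v u]
  by (simp add: matrix_vector_right_distrib matrix_vector_mult_scaleR inner_add_left inner_add_right
      power2_eq_square algebra_simps)

lemma psd_Cauchy_Schwarz: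
  fixes A :: "real^'n^'n"
  assumes sym: "transpose A = A" and psd: "\<And>h. 0 \<le> h \<bullet> (A *v h)"
  shows "(a \<bullet> (A *v b))\<^sup>2 \<le> (a \<bullet> (A *v a)) * (b \<bullet> (A *v b))"
proof -
  define p q s where "p = a \<bullet> (A *v a)" and "q = a \<bullet> (A *v b)" and "s = b \<bullet> (A *v b)"
  have key: "0 \<le> p + 2 * t * q + t\<^sup>2 * s" for t
    using psd[of "1 *\<^sub>R a + t *\<^sub>R b"] unfolding quadratic_form_scaleR_add[OF sym]
    by (simp add: p_def q_def s_def)
  show ?thesis
  proof (cases "s = 0")
    case True
    have "q = 0"
    proof (rule ccontr)
      assume "q \<noteq> 0"
      then have "p + 2 * (- (p + 1) / (2 * q)) * q = -1" by (simp add: field_simps)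
      then show False using key[of "- (p + 1) / (2 * q)"] True by simp
    qed
    then show ?thesis using True by (simp add: q_def s_def)
  next
    case False
    then have "s > 0" using psd[of b] s_def by simp
    have "p + 2 * (- q / s) * q + (- q / s)\<^sup>2 * s = p - q\<^sup>2 / s"
      using \<open>s > 0\<close> by (simp add: field_simps power2_eq_square)
    then have "0 \<le> p - q\<^sup>2 / s" using key[of "- q / s"] by simp
    then have "q\<^sup>2 \<le> p * s" using \<open>s > 0\<close> by (simp add: field_simps)
    then show ?thesis by (simp add: p_def q_def s_def)
  qed
qed

lemma pos_def_imp_invertible:
  fixes A :: "real^'n^'n"
  assumes "\<And>h. h \<noteq> 0 \<Longrightarrow> 0 < h \<bullet> (A *v h)"
  shows "invertible A"
proof -
  have "\<forall>x. A *v x = 0 \<longrightarrow> x = 0"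
    using assms by (metis inner_zero_right less_irrefl)
  then show ?thesis
    using matrix_left_invertible_ker invertible_left_inverse by blast
qed

lemma matrix_inv_cancel:
  fixes A :: "real^'n^'n"
  assumes "invertible A"
  shows matrix_inv_cancel_right: "A *v (matrix_inv A *v y) = y"
    and matrix_inv_cancel_left: "matrix_inv A *v (A *v y) = y"
proof -
  have "A ** matrix_inv A = mat 1 \<and> matrix_inv A ** A = mat 1"
    using assms unfolding invertible_def matrix_inv_def by (rule someI_ex)
  then show "A *v (matrix_inv A *v y) = y" "matrix_inv A *v (A *v y) = y"
    by (simp_all add: matrix_vector_mul_assoc)
qed

lemma quadratic_form_matrix_inv:
  fixes A :: "real^'n^'n"
  assumes "invertible A"
  shows "p \<bullet> (matrix_inv A *v p) = (matrix_inv A *v p) \<bullet> (A *v (matrix_inv A *v p))"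
  using matrix_inv_cancel_right[OF assms] by (simp add: inner_commute)

lemma loewner_le_scaleR_iff:
  "loewner_le A (k *\<^sub>R B) \<longleftrightarrow> (\<forall>h. h \<bullet> (A *v h) \<le> k * (h \<bullet> (B *v h)))"
  by (simp add: loewner_le_def scaleR_matrix_vector_assoc[symmetric])

lemma loewner_le_diff_scaleR_iff:
  "loewner_le (B - A) (k *\<^sub>R C)
     \<longleftrightarrow> (\<forall>h. h \<bullet> (B *v h) - h \<bullet> (A *v h) \<le> k * (h \<bullet> (C *v h)))"
  by (simp add: loewner_le_scaleR_iff matrix_vector_mult_diff_rdistrib inner_diff_right)

lemma pos_def_if_le_scaleR_pos_def:
  assumes "0 \<le> \<eta>" and "loewner_le G (\<eta> *\<^sub>R A)"
    and "\<And>h. h \<noteq> 0 \<Longrightarrow> 0 < h \<bullet> (G *v h)" and "h \<noteq> 0"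
  shows "0 < h \<bullet> (A *v h)"
  using assms unfolding loewner_le_scaleR_iff by (smt (verit) mult_nonneg_nonpos mult_nonpos_nonneg)

lemma matrix_entry_polarization:
  fixes B :: "real^'n^'n"
  assumes "transpose B = B"
  shows "B $ i $ j = ((axis i 1 + axis j 1) \<bullet> (B *v (axis i 1 + axis j 1))
                     - (axis i 1 - axis j 1) \<bullet> (B *v (axis i 1 - axis j 1))) / 4"
proof -
  have "axis i 1 \<bullet> (B *v axis j 1) = B $ i $ j"
    by (simp add: inner_commute[of "axis i 1"] inner_axis matrix_vector_mul_component)
  moreover have "(axis i 1 + axis j 1) \<bullet> (B *v (axis i 1 + axis j 1))
                   - (axis i 1 - axis j 1) \<bullet> (B *v (axis i 1 - axis j 1))
      = 2 * (axis i 1 \<bullet> (B *v axis j 1)) + 2 * (axis j 1 \<bullet> (B *v axis i 1))"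
    unfolding matrix_vector_right_distrib matrix_vector_mult_diff_distrib
      inner_add_left inner_add_right inner_diff_left inner_diff_right
    by simp
  ultimately show ?thesis
    using symmetric_matrix_inner_commute[OF assms, of "axis j 1" "axis i 1"] by simp
qed

section \<open>The \<theta> bound from a two-sided Loewner bound\<close>

lemma theta_eq_via_preimage:
  fixes J G :: "real^'n^'n"
  assumes "invertible J" and symG: "transpose G = G" and v: "J *v v = G *v u"
  shows "theta J G u
    = sqrt ((v \<bullet> (J *v v) - 2 * (u \<bullet> (G *v u)) + u \<bullet> (J *v u)) / (v \<bullet> (J *v v)))"
proof -
  have Jinv: "matrix_inv J *v (G *v u) = v"
    using matrix_inv_cancel_left[OF \<open>invertible J\<close>, of v] v by simp
  have uGv: "u \<bullet> (G *v v) = v \<bullet> (J *v v)"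
    using symmetric_matrix_inner_commute[OF symG, of u v] v by simp
  have "matrix_inv J *v ((G - J) *v u) = v - u"
    using Jinv matrix_inv_cancel_left[OF \<open>invertible J\<close>, of u]
    by (simp add: matrix_vector_mult_diff_rdistrib matrix_vector_mult_diff_distrib)
  then have "u \<bullet> ((G - J) ** matrix_inv J ** (G - J) *v u) = u \<bullet> ((G - J) *v (v - u))"
    by (simp add: matrix_vector_mul_assoc[symmetric])
  also have "\<dots> = u \<bullet> (G *v v) - u \<bullet> (G *v u) - u \<bullet> (J *v v) + u \<bullet> (J *v u)"
    by (simp add: matrix_vector_mult_diff_rdistrib matrix_vector_mult_diff_distrib inner_diff_right)
  also have "\<dots> = v \<bullet> (J *v v) - 2 * (u \<bullet> (G *v u)) + u \<bullet> (J *v u)"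
    using uGv v by simp
  finally show ?thesis
    using Jinv uGv by (simp add: theta_def matrix_vector_mul_assoc[symmetric])
qed

lemma sandwich_cross_inequality:
  fixes J G :: "real^'n^'n"
  assumes symG: "transpose G = G" and symJ: "transpose J = J" and "0 < c" "c \<le> 1"
    and lower: "\<And>h. (1 - c) * (h \<bullet> (G *v h)) \<le> h \<bullet> (J *v h)"
    and upper: "\<And>h. h \<bullet> (J *v h) \<le> (1 + c) * (h \<bullet> (G *v h))"
    and v: "J *v v = G *v u"
  shows "v \<bullet> (J *v v) - 2 * (u \<bullet> (G *v u)) + u \<bullet> (J *v u) \<le> c\<^sup>2 * (v \<bullet> (J *v v))"
proof -
  define a b d e where "a = u \<bullet> (G *v u)" and "b = u \<bullet> (J *v u)"
    and "d = v \<bullet> (J *v v)" and "e = v \<bullet> (G *v v)"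
  have uGv: "u \<bullet> (G *v v) = d" and uJv: "u \<bullet> (J *v v) = a"
    using symmetric_matrix_inner_commute[OF symG, of u v] v by (simp_all add: a_def d_def)
  define p q where "p = 1 *\<^sub>R u + (- (1 - c)) *\<^sub>R v" and "q = (- 1) *\<^sub>R u + (1 + c) *\<^sub>R v"
  have "0 \<le> (1 + c) * (p \<bullet> (G *v p)) - p \<bullet> (J *v p)"
    and "0 \<le> q \<bullet> (J *v q) - (1 - c) * (q \<bullet> (G *v q))"
    using upper[of p] lower[of q] by simp_all
  then have "0 \<le> (1 + c) * ((1 + c) * (p \<bullet> (G *v p)) - p \<bullet> (J *v p))
                 + (1 - c) * (q \<bullet> (J *v q) - (1 - c) * (q \<bullet> (G *v q)))"
    using \<open>0 < c\<close> \<open>c \<le> 1\<close> by (intro add_nonneg_nonneg mult_nonneg_nonneg) auto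
  also have "\<dots> = 2 * c * (c\<^sup>2 * d - (d - 2 * a + b))"
    unfolding p_def q_def quadratic_form_scaleR_add[OF symG] quadratic_form_scaleR_add[OF symJ]
    by (simp add: uGv uJv flip: a_def b_def d_def e_def) (simp add: power2_eq_square algebra_simps)
  finally show ?thesis
    using \<open>0 < c\<close> by (simp add: zero_le_mult_iff a_def b_def d_def)
qed

lemma theta_le_of_sandwich:
  fixes J G :: "real^'n^'n"
  assumes symG: "transpose G = G" and symJ: "transpose J = J"
    and pdJ: "\<And>h. h \<noteq> 0 \<Longrightarrow> 0 < h \<bullet> (J *v h)" and "0 < c" "c \<le> 1"
    and "\<And>h. (1 - c) * (h \<bullet> (G *v h)) \<le> h \<bullet> (J *v h)"
    and "\<And>h. h \<bullet> (J *v h) \<le> (1 + c) * (h \<bullet> (G *v h))"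
  shows "theta J G u \<le> c"
proof -
  have "invertible J" by (rule pos_def_imp_invertible[OF pdJ])
  define v where "v = matrix_inv J *v (G *v u)"
  have v: "J *v v = G *v u"
    unfolding v_def by (rule matrix_inv_cancel_right[OF \<open>invertible J\<close>])
  define N d where "N = v \<bullet> (J *v v) - 2 * (u \<bullet> (G *v u)) + u \<bullet> (J *v u)" and "d = v \<bullet> (J *v v)"
  have "N \<le> c\<^sup>2 * d"
    unfolding N_def d_def by (rule sandwich_cross_inequality[OF symG symJ assms(4-7) v])
  moreover have "d \<ge> 0" using pdJ[of v] by (cases "v = 0") (auto simp: d_def)
  ultimately have "N / d \<le> c\<^sup>2"
    by (cases "d = 0") (auto simp: field_simps)
  then have "sqrt (N / d) \<le> c"
    using \<open>0 < c\<close> real_sqrt_le_mono[of "N / d" "c\<^sup>2"] by simp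
  then show ?thesis
    unfolding theta_eq_via_preimage[OF \<open>invertible J\<close> symG v] N_def d_def .
qed

lemma sandwich_transfer:
  fixes A G J :: "real^'n^'n"
  assumes psdA: "\<And>h. 0 \<le> h \<bullet> (A *v h)"
    and AG: "\<And>h. h \<bullet> (A *v h) \<le> h \<bullet> (G *v h)" and GA: "\<And>h. h \<bullet> (G *v h) \<le> \<eta> * (h \<bullet> (A *v h))"
    and "1 \<le> \<eta>" "\<rho> \<le> \<kappa>" "0 \<le> \<kappa>" "\<kappa> \<le> 1"
    and JA: "\<And>h. h \<bullet> (J *v h) \<le> (1 + \<rho>) * (h \<bullet> (A *v h))"
    and AJ: "\<And>h. (1 - \<rho>) * (h \<bullet> (A *v h)) \<le> h \<bullet> (J *v h)"
  defines "c \<equiv> (\<eta> - 1 + \<kappa>) / \<eta>"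
  shows "h \<bullet> (J *v h) \<le> (1 + c) * (h \<bullet> (G *v h))"
    and "(1 - c) * (h \<bullet> (G *v h)) \<le> h \<bullet> (J *v h)"
proof -
  have "0 \<le> (\<eta> - 1) * (1 - \<kappa>)" using \<open>1 \<le> \<eta>\<close> \<open>\<kappa> \<le> 1\<close> by simp
  then have "\<kappa> \<le> c" using \<open>1 \<le> \<eta>\<close> by (simp add: c_def field_simps algebra_simps)
  have "c \<le> 1" "(1 - c) * \<eta> = 1 - \<kappa>"
    using \<open>1 \<le> \<eta>\<close> \<open>\<kappa> \<le> 1\<close> by (simp_all add: c_def field_simps)
  have "h \<bullet> (J *v h) \<le> (1 + \<rho>) * (h \<bullet> (A *v h))" by (rule JA)
  also have "\<dots> \<le> (1 + c) * (h \<bullet> (A *v h))"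
    using \<open>\<rho> \<le> \<kappa>\<close> \<open>\<kappa> \<le> c\<close> psdA by (intro mult_right_mono) auto
  also have "\<dots> \<le> (1 + c) * (h \<bullet> (G *v h))"
    using AG \<open>0 \<le> \<kappa>\<close> \<open>\<kappa> \<le> c\<close> by (intro mult_left_mono) auto
  finally show "h \<bullet> (J *v h) \<le> (1 + c) * (h \<bullet> (G *v h))" .
  have "(1 - c) * (h \<bullet> (G *v h)) \<le> (1 - c) * (\<eta> * (h \<bullet> (A *v h)))"
    using GA \<open>c \<le> 1\<close> by (intro mult_left_mono) auto
  also have "\<dots> = (1 - \<kappa>) * (h \<bullet> (A *v h))"
    using \<open>(1 - c) * \<eta> = 1 - \<kappa>\<close> by (metis mult.assoc)
  also have "\<dots> \<le> (1 - \<rho>) * (h \<bullet> (A *v h))"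
    using psdA \<open>\<rho> \<le> \<kappa>\<close> by (intro mult_right_mono) auto
  also have "\<dots> \<le> h \<bullet> (J *v h)" by (rule AJ)
  finally show "(1 - c) * (h \<bullet> (G *v h)) \<le> h \<bullet> (J *v h)" .
qed

section \<open>Local norms and the Newton step\<close>

definition local_norm :: "real^'n^'n \<Rightarrow> real^'n \<Rightarrow> real" where
  "local_norm A h = sqrt (h \<bullet> (A *v h))"

lemma local_norm_scaleR: "local_norm A (a *\<^sub>R h) = \<bar>a\<bar> * local_norm A h"
proof -
  have "(a *\<^sub>R h) \<bullet> (A *v (a *\<^sub>R h)) = a\<^sup>2 * (h \<bullet> (A *v h))"
    by (simp add: matrix_vector_mult_scaleR power2_eq_square)
  then show ?thesis by (simp add: local_norm_def real_sqrt_mult)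
qed

lemma local_norm_matrix_inv_pos:
  fixes A :: "real^'n^'n"
  assumes pdA: "\<And>h. h \<noteq> 0 \<Longrightarrow> 0 < h \<bullet> (A *v h)" and "p \<noteq> 0"
  shows "0 < local_norm (matrix_inv A) p"
proof -
  have "invertible A" by (rule pos_def_imp_invertible[OF pdA])
  then have "matrix_inv A *v p \<noteq> 0"
    using matrix_inv_cancel_right[of A p] \<open>p \<noteq> 0\<close> by auto
  then show ?thesis
    using pdA quadratic_form_matrix_inv[OF \<open>invertible A\<close>] by (simp add: local_norm_def)
qed

lemma newton_step_local_norm_le:
  fixes A G :: "real^'n^'n"
  assumes symA: "transpose A = A" and pdA: "\<And>h. h \<noteq> 0 \<Longrightarrow> 0 < h \<bullet> (A *v h)"
    and AG: "\<And>h. h \<bullet> (A *v h) \<le> h \<bullet> (G *v h)" and "invertible G"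
    and u: "u = - (matrix_inv G *v p)"
  shows "local_norm A u \<le> local_norm (matrix_inv A) p"
proof -
  have psd: "0 \<le> h \<bullet> (A *v h)" for h using pdA[of h] by (cases "h = 0") auto
  have "invertible A" by (rule pos_def_imp_invertible[OF pdA])
  define w where "w = matrix_inv A *v p"
  have Aw: "A *v w = p" unfolding w_def by (rule matrix_inv_cancel_right[OF \<open>invertible A\<close>])
  define r lam where "r = local_norm A u" and "lam = local_norm A w"
  have "r \<ge> 0" "lam \<ge> 0" using psd by (simp_all add: r_def lam_def local_norm_def)
  have "G *v u = - p"
    using matrix_inv_cancel_right[OF \<open>invertible G\<close>, of p] matrix_vector_mult_scaleR[of G "-1"] u
    by simp
  then have "r\<^sup>2 \<le> - (u \<bullet> (A *v w))" using AG[of u] psd[of u] Aw by (simp add: r_def local_norm_def)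
  also have "\<dots> \<le> sqrt ((u \<bullet> (A *v w))\<^sup>2)" by simp
  also have "\<dots> \<le> sqrt ((r * lam)\<^sup>2)"
    using psd_Cauchy_Schwarz[OF symA psd, of u w] psd[of u] psd[of w]
    by (intro real_sqrt_le_mono) (simp add: r_def lam_def local_norm_def power_mult_distrib)
  also have "\<dots> = r * lam" using \<open>r \<ge> 0\<close> \<open>lam \<ge> 0\<close> by simp
  finally have "r \<le> lam"
    using \<open>r \<ge> 0\<close> \<open>lam \<ge> 0\<close> by (cases "r = 0") (auto simp: power2_eq_square)
  then show ?thesis
    unfolding r_def lam_def w_def local_norm_def quadratic_form_matrix_inv[OF \<open>invertible A\<close>] .
qed

section \<open>Symmetry of the Hessian\<close>

lemma gradient_increment_near_linear:
  fixes g :: "real^'n \<Rightarrow> real^'n" and H :: "real^'n \<Rightarrow> real^'n^'n"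
  assumes gd: "\<And>y. norm (y - x) < \<rho> \<Longrightarrow> norm (g y - g x - H x *v (y - x)) \<le> \<delta> * norm (y - x)"
    and \<xi>: "0 < \<xi>" "\<xi> < \<epsilon>" and small: "\<epsilon> * (norm h + norm k) < \<rho>" and "0 \<le> \<delta>"
  shows "norm (g (x + \<xi> *\<^sub>R h + \<epsilon> *\<^sub>R k) - g (x + \<xi> *\<^sub>R h) - \<epsilon> *\<^sub>R (H x *v k))
           \<le> \<delta> * \<epsilon> * (2 * norm h + norm k)"
proof -
  define p1 p2 where "p1 = x + \<xi> *\<^sub>R h + \<epsilon> *\<^sub>R k" and "p2 = x + \<xi> *\<^sub>R h"
  have "norm (p1 - x) \<le> norm (\<xi> *\<^sub>R h) + norm (\<epsilon> *\<^sub>R k)"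
    unfolding p1_def by (metis add_diff_cancel_left' add.assoc norm_triangle_ineq)
  also have "\<dots> \<le> \<epsilon> * (norm h + norm k)"
    using \<xi> by (auto simp: distrib_left intro!: add_mono mult_right_mono)
  finally have n1: "norm (p1 - x) \<le> \<epsilon> * (norm h + norm k)" .
  have n2: "norm (p2 - x) \<le> \<epsilon> * norm h"
    unfolding p2_def using \<xi> by (auto intro!: mult_right_mono)
  have "\<epsilon> * norm h \<le> \<epsilon> * (norm h + norm k)" using \<xi> by (simp add: mult_left_mono)
  then have r1: "norm (g p1 - g x - H x *v (p1 - x)) \<le> \<delta> * (\<epsilon> * (norm h + norm k))"
    and r2: "norm (g p2 - g x - H x *v (p2 - x)) \<le> \<delta> * (\<epsilon> * norm h)"
    using gd[of p1] gd[of p2] n1 n2 small \<open>0 \<le> \<delta>\<close> by (auto intro: order_trans mult_left_mono)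
  have "g p1 - g p2 - \<epsilon> *\<^sub>R (H x *v k)
      = (g p1 - g x - H x *v (p1 - x)) - (g p2 - g x - H x *v (p2 - x))"
    by (simp add: p1_def p2_def algebra_simps)
  then have "norm (g p1 - g p2 - \<epsilon> *\<^sub>R (H x *v k))
      \<le> \<delta> * (\<epsilon> * (norm h + norm k)) + \<delta> * (\<epsilon> * norm h)"
    using r1 r2 norm_triangle_ineq4 by (smt (verit))
  then show ?thesis unfolding p1_def p2_def by (simp add: algebra_simps)
qed

lemma second_difference_estimate:
  fixes f :: "real^'n \<Rightarrow> real" and g :: "real^'n \<Rightarrow> real^'n" and H :: "real^'n \<Rightarrow> real^'n^'n"
  assumes fd: "\<And>y. (f has_derivative (\<lambda>h. g y \<bullet> h)) (at y)"
    and gd: "\<And>y. norm (y - x) < \<rho> \<Longrightarrow> norm (g y - g x - H x *v (y - x)) \<le> \<delta> * norm (y - x)"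
    and "\<epsilon> > 0" and small: "\<epsilon> * (norm h + norm k) < \<rho>" and "\<delta> \<ge> 0"
  shows "\<bar>f (x + \<epsilon> *\<^sub>R h + \<epsilon> *\<^sub>R k) - f (x + \<epsilon> *\<^sub>R h) - f (x + \<epsilon> *\<^sub>R k) + f x
           - \<epsilon>\<^sup>2 * ((H x *v k) \<bullet> h)\<bar> \<le> \<delta> * \<epsilon>\<^sup>2 * ((2 * norm h + norm k) * norm h)"
proof -
  define c where "c = \<epsilon> * ((H x *v k) \<bullet> h)"
  define \<phi> where "\<phi> t = f (x + t *\<^sub>R h + \<epsilon> *\<^sub>R k) - f (x + t *\<^sub>R h) - t * c" for t
  define \<phi>' where "\<phi>' t s = s * ((g (x + t *\<^sub>R h + \<epsilon> *\<^sub>R k) - g (x + t *\<^sub>R h)) \<bullet> h - c)" for t s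
  have "(\<phi> has_derivative \<phi>' t) (at t)" for t
  proof -
    have "((\<lambda>t. f (x + t *\<^sub>R h + \<epsilon> *\<^sub>R k)) has_derivative
            (\<lambda>s. g (x + t *\<^sub>R h + \<epsilon> *\<^sub>R k) \<bullet> (s *\<^sub>R h))) (at t)"
      and "((\<lambda>t. f (x + t *\<^sub>R h)) has_derivative (\<lambda>s. g (x + t *\<^sub>R h) \<bullet> (s *\<^sub>R h))) (at t)"
      by (rule has_derivative_compose[OF _ fd]; auto intro!: derivative_eq_intros)+
    moreover have "((\<lambda>t. t * c) has_derivative (\<lambda>s. s * c)) (at t)"
      by (auto intro!: derivative_eq_intros)
    ultimately have "((\<lambda>t. f (x + t *\<^sub>R h + \<epsilon> *\<^sub>R k) - f (x + t *\<^sub>R h) - t * c) has_derivative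
        (\<lambda>s. g (x + t *\<^sub>R h + \<epsilon> *\<^sub>R k) \<bullet> (s *\<^sub>R h) - g (x + t *\<^sub>R h) \<bullet> (s *\<^sub>R h) - s * c)) (at t)"
      by (rule has_derivative_diff[OF has_derivative_diff])
    then show ?thesis
      unfolding \<phi>_def \<phi>'_def by (simp add: inner_diff_left algebra_simps)
  qed
  moreover from this have "continuous_on {0..\<epsilon>} \<phi>"
    by (intro has_derivative_continuous_on) (blast intro: has_derivative_at_withinI)
  ultimately obtain \<xi> where \<xi>: "0 < \<xi>" "\<xi> < \<epsilon>" and mvt: "\<phi> \<epsilon> - \<phi> 0 = \<phi>' \<xi> (\<epsilon> - 0)"
    using mvt[OF \<open>\<epsilon> > 0\<close>] by metis
  define e where "e = g (x + \<xi> *\<^sub>R h + \<epsilon> *\<^sub>R k) - g (x + \<xi> *\<^sub>R h) - \<epsilon> *\<^sub>R (H x *v k)"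
  have "\<phi>' \<xi> (\<epsilon> - 0) = \<epsilon> * (e \<bullet> h)"
    by (simp add: \<phi>'_def e_def c_def inner_diff_left)
  then have "\<bar>\<phi> \<epsilon> - \<phi> 0\<bar> \<le> \<epsilon> * (norm e * norm h)"
    using mvt \<open>\<epsilon> > 0\<close> by (simp add: abs_mult Cauchy_Schwarz_ineq2)
  also have "\<dots> \<le> \<epsilon> * ((\<delta> * \<epsilon> * (2 * norm h + norm k)) * norm h)"
    using gradient_increment_near_linear[where g=g and H=H, OF gd \<xi> small \<open>\<delta> \<ge> 0\<close>] \<open>\<epsilon> > 0\<close>
    unfolding e_def by (intro mult_left_mono mult_right_mono) auto
  finally show ?thesis
    by (simp add: \<phi>_def c_def power2_eq_square algebra_simps)
qed

lemma hessian_bilinear_symmetric: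
  fixes f :: "real^'n \<Rightarrow> real" and g :: "real^'n \<Rightarrow> real^'n" and H :: "real^'n \<Rightarrow> real^'n^'n"
  assumes fd: "\<And>y. (f has_derivative (\<lambda>h. g y \<bullet> h)) (at y)"
    and gd: "\<And>y. (g has_derivative (\<lambda>h. H y *v h)) (at y)"
  shows "(H x *v k) \<bullet> h = (H x *v h) \<bullet> k"
proof (rule ccontr)
  assume "(H x *v k) \<bullet> h \<noteq> (H x *v h) \<bullet> k"
  define d where "d = \<bar>(H x *v k) \<bullet> h - (H x *v h) \<bullet> k\<bar>"
  define K where "K = (2 * norm h + norm k) * norm h + (2 * norm k + norm h) * norm k"
  define \<delta> where "\<delta> = d / (2 * (K + 1))"
  have "d > 0" "K \<ge> 0" using \<open>(H x *v k) \<bullet> h \<noteq> _\<close> by (simp_all add: d_def K_def)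
  then have "\<delta> > 0" and "\<delta> * K < d" by (simp_all add: \<delta>_def field_simps add_nonneg_pos)
  obtain \<rho> where "\<rho> > 0"
    and gd': "\<And>y. norm (y - x) < \<rho> \<Longrightarrow> norm (g y - g x - H x *v (y - x)) \<le> \<delta> * norm (y - x)"
    using gd[of x] \<open>\<delta> > 0\<close> unfolding has_derivative_within_alt by blast
  define \<epsilon> where "\<epsilon> = \<rho> / (2 * (norm h + norm k + 1))"
  have "\<epsilon> > 0" using \<open>\<rho> > 0\<close> by (simp add: \<epsilon>_def add_nonneg_pos)
  have "\<epsilon> * (norm h + norm k) < \<epsilon> * (2 * (norm h + norm k + 1))"
    using \<open>\<epsilon> > 0\<close> by (intro mult_strict_left_mono) (auto, smt (verit) norm_ge_zero)
  also have "\<dots> = \<rho>" unfolding \<epsilon>_def by (simp, smt (verit) norm_ge_zero)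
  finally have small: "\<epsilon> * (norm h + norm k) < \<rho>" "\<epsilon> * (norm k + norm h) < \<rho>"
    by (simp_all add: add.commute)
  \<comment> \<open>the second difference is symmetric in h and k, so both estimates bound the same quantity\<close>
  note est = second_difference_estimate[where g=g and H=H and h=h and k=k, OF fd gd' \<open>\<epsilon> > 0\<close> small(1)]
    second_difference_estimate[where g=g and H=H and h=k and k=h, OF fd gd' \<open>\<epsilon> > 0\<close> small(2)]
  have swap: "x + \<epsilon> *\<^sub>R k + \<epsilon> *\<^sub>R h = x + \<epsilon> *\<^sub>R h + \<epsilon> *\<^sub>R k" by (simp add: algebra_simps)
  have "\<epsilon>\<^sup>2 * d \<le> \<delta> * \<epsilon>\<^sup>2 * ((2 * norm h + norm k) * norm h)
                     + \<delta> * \<epsilon>\<^sup>2 * ((2 * norm k + norm h) * norm k)"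
    using est \<open>\<delta> > 0\<close> unfolding swap d_def by (simp add: abs_mult) (smt (verit) right_diff_distrib)
  also have "\<dots> = \<epsilon>\<^sup>2 * (\<delta> * K)" by (simp add: K_def algebra_simps)
  finally have "d \<le> \<delta> * K" using \<open>\<epsilon> > 0\<close> by simp
  with \<open>\<delta> * K < d\<close> show False by simp
qed

lemma hessian_symmetric:
  fixes f :: "real^'n \<Rightarrow> real" and g :: "real^'n \<Rightarrow> real^'n" and H :: "real^'n \<Rightarrow> real^'n^'n"
  assumes "\<And>y. (f has_derivative (\<lambda>h. g y \<bullet> h)) (at y)"
    and "\<And>y. (g has_derivative (\<lambda>h. H y *v h)) (at y)"
  shows "transpose (H x) = H x"
proof -
  have "(A *v axis j 1) \<bullet> axis i 1 = A $ i $ j" for A :: "real^'n^'n" and i j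
    by (simp add: inner_axis matrix_vector_mul_component)
  then show ?thesis
    unfolding vec_eq_iff transpose_def
    using hessian_bilinear_symmetric[OF assms] by (metis vec_lambda_beta)
qed

section \<open>The averaged Hessian of a strongly self-concordant function\<close>

definition strongly_self_concordant :: "(real^'n \<Rightarrow> real^'n^'n) \<Rightarrow> real \<Rightarrow> bool" where
  "strongly_self_concordant H M \<longleftrightarrow>
     (\<forall>x y z w. loewner_le (H y - H x) ((M * local_norm (H z) (y - x)) *\<^sub>R H w))"

definition averaged_hessian :: "(real^'n \<Rightarrow> real^'n^'n) \<Rightarrow> real^'n \<Rightarrow> real^'n \<Rightarrow> real^'n^'n" where
  "averaged_hessian H x u = integral {0..1} (\<lambda>\<tau>. H (x + \<tau> *\<^sub>R u))"

lemma self_concordant_along_segment: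
  assumes "strongly_self_concordant H M"
  shows "h \<bullet> (H (x + t *\<^sub>R u) *v h) - h \<bullet> (H (x + s *\<^sub>R u) *v h)
           \<le> M * \<bar>t - s\<bar> * local_norm (H x) u * (h \<bullet> (H w *v h))"
proof -
  have "local_norm (H x) ((x + t *\<^sub>R u) - (x + s *\<^sub>R u)) = \<bar>t - s\<bar> * local_norm (H x) u"
    by (simp add: algebra_simps flip: local_norm_scaleR)
  with assms show ?thesis
    unfolding strongly_self_concordant_def loewner_le_diff_scaleR_iff by (metis mult.assoc)
qed

lemma isCont_of_abs_diff_le:
  fixes F :: "real \<Rightarrow> real"
  assumes "\<And>t. \<bar>F t - F t0\<bar> \<le> C * \<bar>t - t0\<bar>"
  shows "isCont F t0"
proof -
  have "((\<lambda>t. F t - F t0) \<longlongrightarrow> 0) (at t0)"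
  proof (rule Lim_null_comparison)
    show "\<forall>\<^sub>F t in at t0. norm (F t - F t0) \<le> C * \<bar>t - t0\<bar>" using assms by simp
    have "((\<lambda>t. C * \<bar>t - t0\<bar>) \<longlongrightarrow> C * \<bar>t0 - t0\<bar>) (at t0)"
      by (intro tendsto_intros)
    then show "((\<lambda>t. C * \<bar>t - t0\<bar>) \<longlongrightarrow> 0) (at t0)" by simp
  qed
  then show ?thesis unfolding isCont_def using LIM_zero_cancel by blast
qed

lemma continuous_on_symmetric_matrix_function:
  fixes F :: "'a::topological_space \<Rightarrow> real^'n^'n"
  assumes "\<And>t. transpose (F t) = F t" and "\<And>h. continuous_on S (\<lambda>t. h \<bullet> (F t *v h))"
  shows "continuous_on S F"
proof -
  have "continuous_on S (\<lambda>t. F t $ i $ j)" for i j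
    unfolding matrix_entry_polarization[OF assms(1)]
    by (intro continuous_on_divide continuous_on_diff assms(2) continuous_on_const) auto
  then have "continuous_on S (\<lambda>t. \<chi> i j. F t $ i $ j)"
    by (intro continuous_on_vec_lambda)
  then show ?thesis by (simp add: vec_lambda_eta)
qed

lemma has_integral_quadratic_form:
  fixes F :: "'a::euclidean_space \<Rightarrow> real^'n^'n"
  assumes "(F has_integral J) S"
  shows "((\<lambda>t. h \<bullet> (F t *v h)) has_integral h \<bullet> (J *v h)) S"
proof -
  have "bounded_linear (\<lambda>B::real^'n^'n. h \<bullet> (B *v h))"
    unfolding linear_linear
    by (rule linearI) (simp_all add: matrix_vector_mult_add_rdistrib inner_add_right
        flip: scaleR_matrix_vector_assoc)
  from has_integral_linear[OF assms this] show ?thesis by (simp add: o_def)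
qed

lemma has_integral_symmetric_matrix:
  fixes F :: "'a::euclidean_space \<Rightarrow> real^'n^'n"
  assumes "(F has_integral J) S" and "\<And>t. t \<in> S \<Longrightarrow> transpose (F t) = F t"
  shows "transpose J = J"
proof -
  have "bounded_linear (transpose :: real^'n^'n \<Rightarrow> real^'n^'n)"
    unfolding linear_linear by (rule linearI) (simp_all add: transpose_def vec_eq_iff)
  from has_integral_linear[OF assms(1) this] have "((transpose \<circ> F) has_integral transpose J) S" .
  then have "(F has_integral transpose J) S"
    using assms(2) by (subst has_integral_cong[of _ F "transpose \<circ> F"]) auto
  then show ?thesis using assms(1) has_integral_unique by blast
qed

lemma continuous_on_hessian_segment:
  fixes H :: "real^'n \<Rightarrow> real^'n^'n"
  assumes sym: "\<And>y. transpose (H y) = H y" and ssc: "strongly_self_concordant H M"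
  shows "continuous_on S (\<lambda>t. H (x + t *\<^sub>R u))"
proof (rule continuous_on_symmetric_matrix_function[OF sym])
  fix h :: "real^'n"
  define C q where "C = M * local_norm (H x) u" and "q t = h \<bullet> (H (x + t *\<^sub>R u) *v h)" for t
  have "isCont q s" for s
  proof (rule isCont_of_abs_diff_le)
    fix t
    have "q t - q s \<le> C * \<bar>t - s\<bar> * q s" "q s - q t \<le> C * \<bar>s - t\<bar> * q s"
      unfolding q_def C_def using self_concordant_along_segment[OF ssc] by (simp_all add: ac_simps)
    moreover have "C * \<bar>t - s\<bar> * q s \<le> \<bar>C * q s\<bar> * \<bar>t - s\<bar>"
      by (metis abs_ge_self abs_mult abs_abs mult.commute mult.assoc)
    ultimately show "\<bar>q t - q s\<bar> \<le> \<bar>C * q s\<bar> * \<bar>t - s\<bar>"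
      unfolding abs_le_iff abs_minus_commute[of s t] by linarith
  qed
  then show "continuous_on S (\<lambda>t. h \<bullet> (H (x + t *\<^sub>R u) *v h))"
    unfolding q_def by (simp add: continuous_at_imp_continuous_on)
qed

lemma has_integral_affine_unit_interval:
  "((\<lambda>\<tau>::real. a + b * \<tau>) has_integral (a + b / 2)) {0..1}"
proof -
  have "((\<lambda>\<tau>::real. b * \<tau>) has_integral b * (1/2)) {0..1}"
    using has_integral_mult_right[OF ident_has_integral[of 0 1]] by (simp add: power2_eq_square)
  from has_integral_add[OF has_integral_const_real[of a 0 1] this] show ?thesis by simp
qed

context
  fixes H :: "real^'n \<Rightarrow> real^'n^'n" and M :: real and x u :: "real^'n"
  assumes sym: "\<And>y. transpose (H y) = H y" and ssc: "strongly_self_concordant H M"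
begin

lemma has_integral_averaged_hessian:
  "((\<lambda>\<tau>. h \<bullet> (H (x + \<tau> *\<^sub>R u) *v h)) has_integral h \<bullet> (averaged_hessian H x u *v h)) {0..1}"
  and averaged_hessian_symmetric: "transpose (averaged_hessian H x u) = averaged_hessian H x u"
proof -
  have "((\<lambda>\<tau>. H (x + \<tau> *\<^sub>R u)) has_integral averaged_hessian H x u) {0..1}"
    using integrable_continuous_real[OF continuous_on_hessian_segment[OF sym ssc]]
    by (simp add: averaged_hessian_def integrable_integral)
  from has_integral_quadratic_form[OF this] has_integral_symmetric_matrix[OF this sym]
  show "((\<lambda>\<tau>. h \<bullet> (H (x + \<tau> *\<^sub>R u) *v h)) has_integral h \<bullet> (averaged_hessian H x u *v h)) {0..1}"
    and "transpose (averaged_hessian H x u) = averaged_hessian H x u" .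
qed

lemma averaged_hessian_upper:
  "h \<bullet> (averaged_hessian H x u *v h) \<le> (1 + M * local_norm (H x) u / 2) * (h \<bullet> (H x *v h))"
proof -
  define a b where "a = h \<bullet> (H x *v h)" and "b = M * local_norm (H x) u * (h \<bullet> (H x *v h))"
  have "h \<bullet> (averaged_hessian H x u *v h) \<le> a + b / 2"
  proof (rule has_integral_le[OF has_integral_averaged_hessian has_integral_affine_unit_interval])
    show "h \<bullet> (H (x + t *\<^sub>R u) *v h) \<le> a + b * t" if "t \<in> {0..1}" for t
      using self_concordant_along_segment[OF ssc, of h x t u 0 x] that
      by (simp add: a_def b_def algebra_simps)
  qed
  then show ?thesis by (simp add: a_def b_def algebra_simps)
qed

lemma averaged_hessian_lower:
  "(1 - M * local_norm (H x) u / 2) * (h \<bullet> (H x *v h)) \<le> h \<bullet> (averaged_hessian H x u *v h)"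
proof -
  define a b where "a = h \<bullet> (H x *v h)" and "b = - M * local_norm (H x) u * (h \<bullet> (H x *v h))"
  have "a + b / 2 \<le> h \<bullet> (averaged_hessian H x u *v h)"
  proof (rule has_integral_le[OF has_integral_affine_unit_interval has_integral_averaged_hessian])
    show "a + b * t \<le> h \<bullet> (H (x + t *\<^sub>R u) *v h)" if "t \<in> {0..1}" for t
      using self_concordant_along_segment[OF ssc, of h x 0 u t x] that
      by (simp add: a_def b_def algebra_simps)
  qed
  then show ?thesis by (simp add: a_def b_def algebra_simps)
qed

lemma averaged_hessian_pos_def:
  assumes "0 \<le> M" and pd: "\<And>h. h \<noteq> 0 \<Longrightarrow> 0 < h \<bullet> (H x *v h)" and "h \<noteq> 0"
  shows "0 < h \<bullet> (averaged_hessian H x u *v h)"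
proof -
  define C q where "C = M * local_norm (H x) u" and "q t = h \<bullet> (H (x + t *\<^sub>R u) *v h)" for t
  have "q 0 > 0" using pd[OF \<open>h \<noteq> 0\<close>] by (simp add: q_def)
  have "C \<ge> 0" using \<open>0 \<le> M\<close> pd[of u] by (cases "u = 0") (auto simp: C_def local_norm_def)
  have "q 0 / (1 + C) \<le> h \<bullet> (averaged_hessian H x u *v h)"
  proof (rule has_integral_le[OF _ has_integral_averaged_hessian])
    show "((\<lambda>t. q 0 / (1 + C)) has_integral q 0 / (1 + C)) {0..1::real}"
      using has_integral_const_real[of "q 0 / (1 + C)" 0 1] by simp
    fix t :: real assume t: "t \<in> {0..1}"
    have "q 0 - q t \<le> C * t * q t"
      using self_concordant_along_segment[OF ssc, of h x 0 u t "x + t *\<^sub>R u"] t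
      by (simp add: q_def C_def ac_simps)
    then have le: "q 0 \<le> (1 + C * t) * q t" by (simp add: algebra_simps)
    have "0 \<le> C * t" using \<open>C \<ge> 0\<close> t by simp
    with le \<open>q 0 > 0\<close> have "q t > 0" by (smt (verit) mult_nonneg_nonpos)
    moreover have "C * t \<le> C" using t \<open>C \<ge> 0\<close> by (simp add: mult_left_le)
    ultimately have "(1 + C * t) * q t \<le> (1 + C) * q t" by (intro mult_right_mono) auto
    with le \<open>q 0 > 0\<close> \<open>C \<ge> 0\<close> show "q 0 / (1 + C) \<le> h \<bullet> (H (x + t *\<^sub>R u) *v h)"
      unfolding q_def[of t, symmetric] by (simp add: field_simps)
  qed
  moreover have "q 0 / (1 + C) > 0" using \<open>q 0 > 0\<close> \<open>C \<ge> 0\<close> by simp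
  ultimately show ?thesis by simp
qed

end

lemma standing_assumptions_hessian:
  assumes "standing_assumptions f g H \<mu> L M"
  shows standing_assumptions_hessian_symmetric: "transpose (H y) = H y"
    and standing_assumptions_self_concordant: "strongly_self_concordant H M"
  using hessian_symmetric[of f g H] assms
  unfolding standing_assumptions_def strongly_self_concordant_def local_norm_def by blast+

theorem lemma9:
  fixes f :: "real^'n \<Rightarrow> real" and g :: "real^'n \<Rightarrow> real^'n" and H :: "real^'n \<Rightarrow> real^'n^'n"
    and \<mu> L M \<eta> :: real and x x' :: "real^'n" and G :: "real^'n^'n"
  assumes "0 < \<mu>" "\<mu> \<le> L" "0 < M"
    and "standing_assumptions f g H \<mu> L M"
    and "g x \<noteq> 0"
    and "sym_pos_def G"
    and "\<eta> \<ge> 1"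
    and "loewner_le (H x) G" "loewner_le G (\<eta> *\<^sub>R H x)"
    and "x' = x - matrix_inv G *v g x"
    and "M * newton_decrement g H x \<le> 2"
  shows "sqrt ((x' - x) \<bullet> (H x *v (x' - x))) \<le> newton_decrement g H x
       \<and> theta (integral {0..1} (\<lambda>\<tau>. H (x + \<tau> *\<^sub>R (x' - x)))) G (x' - x)
           \<le> (\<eta> - 1 + M * newton_decrement g H x / 2) / \<eta>"
proof -
  note symH = standing_assumptions_hessian_symmetric[OF assms(4)]
    and ssc = standing_assumptions_self_concordant[OF assms(4)]
  have symG: "transpose G = G" and pdG: "\<And>h. h \<noteq> 0 \<Longrightarrow> 0 < h \<bullet> (G *v h)"
    using assms(6) unfolding sym_pos_def_def by auto
  have "0 \<le> \<eta>" using \<open>\<eta> \<ge> 1\<close> by simp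
  note pdA = pos_def_if_le_scaleR_pos_def[OF this assms(9) pdG]
  then have psdA: "0 \<le> h \<bullet> (H x *v h)" for h by (cases "h = 0") (auto simp: less_imp_le)
  have AG: "\<And>h. h \<bullet> (H x *v h) \<le> h \<bullet> (G *v h)" using assms(8) by (simp add: loewner_le_def)
  have GA: "\<And>h. h \<bullet> (G *v h) \<le> \<eta> * (h \<bullet> (H x *v h))" using assms(9) by (simp add: loewner_le_scaleR_iff)
  define lam where "lam = newton_decrement g H x"
  have lam: "lam = local_norm (matrix_inv (H x)) (g x)"
    by (simp add: lam_def newton_decrement_def local_norm_def)
  have step: "local_norm (H x) (x' - x) \<le> lam"
    using newton_step_local_norm_le[OF symH pdA AG pos_def_imp_invertible[OF pdG]] assms(10) by (simp add: lam)
  have "0 < M * lam" "M * lam \<le> 2"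
    using local_norm_matrix_inv_pos[OF pdA assms(5)] \<open>0 < M\<close> assms(11) by (simp_all add: lam flip: lam_def)
  define c where "c = (\<eta> - 1 + M * lam / 2) / \<eta>"
  have "0 < c" "c \<le> 1" using \<open>0 < M * lam\<close> \<open>M * lam \<le> 2\<close> \<open>\<eta> \<ge> 1\<close> by (simp_all add: c_def field_simps)
  note sandwich = sandwich_transfer[OF psdA AG GA \<open>\<eta> \<ge> 1\<close> _ _ _
      averaged_hessian_upper[OF symH ssc] averaged_hessian_lower[OF symH ssc], where \<kappa> = "M * lam / 2", folded c_def]
  have "theta (averaged_hessian H x (x' - x)) G (x' - x) \<le> c"
    using step \<open>0 < M\<close> \<open>0 < M * lam\<close> \<open>M * lam \<le> 2\<close>
    by (intro theta_le_of_sandwich[OF symG averaged_hessian_symmetric[OF symH ssc]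
          averaged_hessian_pos_def[OF symH ssc] \<open>0 < c\<close> \<open>c \<le> 1\<close>] sandwich)
      (auto intro: pdA less_imp_le)
  with step show ?thesis by (simp add: lam_def c_def local_norm_def averaged_hessian_def)
qed

end
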